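(* Let $x\in\mathbb{R}\setminus D$. If at least one of $\limsup_n G_n'(x)$, $\liminf_n G_n'(x)$ is infinite, or if both are finite and $$\limsup_n G_n'(x)-\liminf_n G_n'(x)>2,$$ then $\partial^+T(x)=\varnothing$.
   Context: Let $\phi(x)=\operatorname{dist}(x,\mathbb{Z})$ and let $T(x)=\sum_{n=0}^\infty 2^{-n}\phi(2^nx)$ be the Takagi function. For $n\ge1$ let $D_n=\{k/2^{n-1}:k\in\mathbb{Z}\}$, $D=\bigcup_nD_n$, $g_k(x)=\operatorname{dist}(x,D_k)$, $G_n=g_1+\dots+g_n$. For $x\notin D$, $G_n'(x)$ exists and is an integer. The Fréchet superdifferential of an upper semicontinuous $f:\mathbb{R}\to\mathbb{R}$ at $x$ is $\partial^+f(x)=\{\xi\in\mathbb{R}: \limsup_{h\to0}\frac{f(x+h)-f(x)-\xi h}{|h|}\le0\}$. *)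

theory Defs
  imports "HOL-Analysis.Analysis" "HOL-Library.Extended_Real"
begin

definition phi :: "real \<Rightarrow> real" where
  "phi x = infdist x \<int>"

definition takagi :: "real \<Rightarrow> real" where
  "takagi x = (\<Sum>n. phi (2 ^ n * x) / 2 ^ n)"

text \<open>D_n = {k / 2^(n-1) : k in Z}, intended for n >= 1\<close>
definition Dn :: "nat \<Rightarrow> real set" where
  "Dn n = {real_of_int k / 2 ^ (n - 1) | k. True}"

definition Dall :: "real set" where
  "Dall = (\<Union>n\<in>{1..}. Dn n)"

definition gk :: "nat \<Rightarrow> real \<Rightarrow> real" where
  "gk k x = infdist x (Dn k)"

definition Gn :: "nat \<Rightarrow> real \<Rightarrow> real" where
  "Gn n x = (\<Sum>k=1..n. gk k x)"

definition superdiff :: "(real \<Rightarrow> real) \<Rightarrow> real \<Rightarrow> real set" where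
  "superdiff f x = {\<xi>. Limsup (at 0) (\<lambda>h. ereal ((f (x + h) - f x - \<xi> * h) / \<bar>h\<bar>)) \<le> 0}"

end

theory Submission
  imports Defs
begin

text \<open>
  Fix a non-dyadic \<open>x\<close> and a level \<open>n\<close>. On the dyadic interval of level \<open>n\<close> containing \<open>x\<close>
  the partial sum \<open>G\<^sub>n\<close> is affine with slope \<open>G\<^sub>n'(x)\<close>, while the tail \<open>T - G\<^sub>n\<close> is symmetric
  about the midpoint of that interval. Reflecting \<open>x\<close> in the midpoint therefore gives a point
  \<open>x'\<close> with \<open>|x' - x| \<le> 2\<^sup>-\<^sup>n\<close> and \<open>T(x') - T(x) = G\<^sub>n'(x) (x' - x)\<close>; moreover \<open>x' > x\<close>
  exactly when \<open>x\<close> lies in the left half, i.e. when \<open>G\<^sub>n\<^sub>+\<^sub>1'(x) = G\<^sub>n'(x) + 1\<close>.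
  If \<open>\<xi>\<close> were a supergradient, then for large \<open>n\<close> the sequence \<open>G\<^sub>n'(x)\<close> could only step up
  from below \<open>\<xi> + \<epsilon>\<close> and only step down from above \<open>\<xi> - \<epsilon>\<close>, so it would eventually stay
  in \<open>[\<xi> - \<epsilon> - 1, \<xi> + \<epsilon> + 1]\<close>, forcing \<open>limsup - liminf \<le> 2\<close>.
\<close>

lemma infdist_int_multiples:
  fixes \<delta> :: real
  assumes "\<delta> > 0"
  shows "infdist y {of_int m * \<delta> | m. True} = \<delta> * min (frac (y / \<delta>)) (1 - frac (y / \<delta>))"
proof -
  let ?A = "{of_int m * \<delta> | m::int. True}"
  define i where "i = \<lfloor>y / \<delta>\<rfloor>"
  define f where "f = frac (y / \<delta>)"
  have f: "0 \<le> f" "f < 1"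
    unfolding f_def by (simp_all add: frac_lt_1)
  have y: "y = (i + f) * \<delta>"
    using assms by (simp add: i_def f_def frac_def field_simps)
  have ne: "?A \<noteq> {}" by auto
  have "infdist y ?A \<le> \<delta> * f"
    by (rule infdist_le2[of "of_int i * \<delta>"]) (use y assms f in \<open>auto simp: dist_real_def algebra_simps\<close>)
  moreover have "infdist y ?A \<le> \<delta> * (1 - f)"
    by (rule infdist_le2[of "of_int (i + 1) * \<delta>"])
      (use y assms f in \<open>auto simp: dist_real_def algebra_simps intro!: exI[of _ "i + 1"]\<close>)
  moreover have "\<delta> * min f (1 - f) \<le> infdist y ?A"
    unfolding infdist_notempty[OF ne]
  proof (rule cINF_greatest[OF ne])
    fix a assume "a \<in> ?A"
    then obtain m where a: "a = of_int m * \<delta>" by auto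
    show "\<delta> * min f (1 - f) \<le> dist y a"
    proof (cases "m \<le> i")
      case True
      hence "\<delta> * m \<le> \<delta> * i" using assms by simp
      hence "\<delta> * f \<le> y - a" using a y by (simp add: algebra_simps)
      moreover have "\<delta> * min f (1 - f) \<le> \<delta> * f" using assms by simp
      ultimately show ?thesis by (simp add: dist_real_def)
    next
      case False
      hence "\<delta> * (i + 1) \<le> \<delta> * m" using assms by simp
      hence "\<delta> * (1 - f) \<le> a - y" using a y by (simp add: algebra_simps)
      moreover have "\<delta> * min f (1 - f) \<le> \<delta> * (1 - f)" using assms by simp
      ultimately show ?thesis by (simp add: dist_real_def)
    qed
  qed
  ultimately show ?thesis
    using assms by (auto simp: f_def min_def)
qed

lemma phi_eq_min_frac: "phi t = min (frac t) (1 - frac t)"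
proof -
  have "\<int> = {of_int m * (1::real) | m. True}" by (auto simp: Ints_def)
  then show ?thesis unfolding phi_def using infdist_int_multiples[of 1 t] by simp
qed

lemma phi_nonneg: "0 \<le> phi t"
  unfolding phi_eq_min_frac using frac_lt_1[of t] by simp

lemma phi_le_half: "phi t \<le> 1 / 2"
  unfolding phi_eq_min_frac by linarith

lemma phi_minus: "phi (- t) = phi t"
proof (cases "t \<in> \<int>")
  case True
  then show ?thesis by (simp add: phi_def)
qed (simp add: phi_eq_min_frac frac_neg min.commute)

lemma phi_of_int_diff: "phi (of_int N - t) = phi t"
proof -
  have "phi (of_int N - t) = phi (- t)"
    unfolding phi_eq_min_frac diff_conv_add_uminus add.commute[of "of_int N"] frac_add_of_int_right ..
  then show ?thesis by (simp add: phi_minus)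
qed

lemma phi_on_half_interval:
  fixes p :: int
  assumes "p / 2 \<le> t" "t \<le> (p + 1) / 2"
  shows "phi t = (if even p then t - p / 2 else (p + 1) / 2 - t)"
proof (cases "even p")
  case True
  then obtain i where p: "p = 2 * i" by blast
  have "\<lfloor>t\<rfloor> = i" using assms p by (simp add: floor_eq_iff)
  then have "frac t = t - i" by (simp add: frac_def)
  then show ?thesis using True p assms by (simp add: phi_eq_min_frac min_def)
next
  case False
  then obtain i where p: "p = 2 * i + 1" using oddE by blast
  show ?thesis
  proof (cases "t < i + 1")
    case True
    have "\<lfloor>t\<rfloor> = i" using assms p True by (simp add: floor_eq_iff)
    then have "frac t = t - i" by (simp add: frac_def)
    then show ?thesis using False p assms by (simp add: phi_eq_min_frac min_def)
  next
    case False
    then have "t = i + 1" using assms p by simp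
    then show ?thesis using \<open>odd p\<close> p by (simp add: phi_eq_min_frac)
  qed
qed

lemma gk_eq_phi: "gk j y = phi (2 ^ (j - 1) * y) / 2 ^ (j - 1)"
proof -
  have "Dn j = {of_int m * (1 / 2 ^ (j - 1)) | m. True}" unfolding Dn_def by auto
  then show ?thesis
    unfolding gk_def phi_eq_min_frac
    using infdist_int_multiples[of "1 / 2 ^ (j - 1)" y] by (simp add: mult.commute)
qed

lemma Gn_eq_sum: "Gn n y = (\<Sum>i<n. phi (2 ^ i * y) / 2 ^ i)"
proof -
  have "Gn n y = (\<Sum>j=1..n. phi (2 ^ (j - 1) * y) / 2 ^ (j - 1))"
    unfolding Gn_def by (simp add: gk_eq_phi)
  also have "\<dots> = (\<Sum>i<n. phi (2 ^ i * y) / 2 ^ i)"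
    by (rule sum.reindex_bij_witness[of _ "\<lambda>i. i + 1" "\<lambda>j. j - 1"]) auto
  finally show ?thesis .
qed

lemma Gn_Suc: "Gn (Suc n) y = Gn n y + phi (2 ^ n * y) / 2 ^ n"
  by (simp add: Gn_eq_sum)

lemma summable_takagi_terms: "summable (\<lambda>n. phi (2 ^ n * y) / 2 ^ n)"
proof (rule summable_comparison_test[of _ "\<lambda>n. (1 / 2 :: real) ^ n"])
  have "norm (phi (2 ^ n * y) / 2 ^ n) \<le> (1 / 2) ^ n" for n :: nat
    using phi_nonneg[of "2 ^ n * y"] phi_le_half[of "2 ^ n * y"]
    by (simp add: power_one_over divide_right_mono)
  then show "\<exists>N. \<forall>n\<ge>N. norm (phi (2 ^ n * y) / 2 ^ n) \<le> (1 / 2) ^ n" by blast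
qed simp

text \<open>The hypothesis says that \<open>x\<close> and \<open>x'\<close> are mirror images in a point of \<open>2\<^sup>-\<^sup>n\<^sup>-\<^sup>1 \<int>\<close>.\<close>

lemma takagi_reflect:
  assumes "2 ^ n * (x + x') \<in> \<int>"
  shows "takagi x' - takagi x = Gn n x' - Gn n x"
proof -
  have split: "takagi y = Gn n y + (\<Sum>m. phi (2 ^ (m + n) * y) / 2 ^ (m + n))" for y
    unfolding takagi_def Gn_eq_sum
    using suminf_split_initial_segment[OF summable_takagi_terms, of y n] by simp
  obtain N where N: "2 ^ n * (x + x') = of_int N" using assms by (auto elim: Ints_cases)
  have "2 ^ (m + n) * x' = of_int (2 ^ m * N) - 2 ^ (m + n) * x" for m
    using arg_cong[OF N, of "(*) (2 ^ m)"] by (simp add: power_add algebra_simps)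
  then have "phi (2 ^ (m + n) * x') = phi (2 ^ (m + n) * x)" for m
    by (simp only: phi_of_int_diff)
  then show ?thesis unfolding split[of x] split[of x'] by simp
qed

lemma phi_dyadic_term_on_interval:
  fixes k :: int
  assumes "of_int k \<le> 2 ^ Suc n * y" "2 ^ Suc n * y \<le> of_int k + 1"
  shows "phi (2 ^ n * y) / 2 ^ n
    = (if even k then y - of_int k / 2 ^ Suc n else (of_int k + 1) / 2 ^ Suc n - y)"
proof -
  have "of_int k / 2 \<le> 2 ^ n * y" "2 ^ n * y \<le> (of_int k + 1) / 2" using assms by auto
  then show ?thesis by (simp add: phi_on_half_interval field_simps)
qed

lemma dyadic_interval_parent:
  fixes k :: int and y :: real
  assumes "of_int k \<le> 2 ^ Suc n * y" "2 ^ Suc n * y \<le> of_int k + 1"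
  shows "of_int (k div 2) \<le> 2 ^ n * y \<and> 2 ^ n * y \<le> of_int (k div 2) + 1"
proof -
  have "real_of_int k = 2 * of_int (k div 2) + of_int (k mod 2)"
    by (metis mult_div_mod_eq of_int_add of_int_mult of_int_numeral)
  moreover have "0 \<le> real_of_int (k mod 2)" "real_of_int (k mod 2) \<le> 1" by simp_all
  ultimately show ?thesis using assms by auto
qed

lemma Gn_Suc_affine_on_child:
  fixes k :: int
  assumes "\<And>y. of_int (k div 2) \<le> 2 ^ n * y \<and> 2 ^ n * y \<le> of_int (k div 2) + 1 \<Longrightarrow> Gn n y = A + S * y"
  shows "\<exists>A'. \<forall>y. of_int k \<le> 2 ^ Suc n * y \<and> 2 ^ Suc n * y \<le> of_int k + 1
    \<longrightarrow> Gn (Suc n) y = A' + (S + (if even k then 1 else -1)) * y"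
proof (intro exI allI impI)
  fix y :: real
  assume y: "of_int k \<le> 2 ^ Suc n * y \<and> 2 ^ Suc n * y \<le> of_int k + 1"
  have "Gn n y = A + S * y" using assms dyadic_interval_parent y by blast
  then show "Gn (Suc n) y = (A + (if even k then - of_int k else of_int k + 1) / 2 ^ Suc n)
      + (S + (if even k then 1 else -1)) * y"
    unfolding Gn_Suc phi_dyadic_term_on_interval[OF conjunct1[OF y] conjunct2[OF y]]
    by (simp add: algebra_simps)
qed

lemma Gn_affine_on_dyadic_interval:
  fixes k :: int
  shows "\<exists>A S. \<forall>y. of_int k \<le> 2 ^ n * y \<and> 2 ^ n * y \<le> of_int k + 1 \<longrightarrow> Gn n y = A + S * y"
proof (induction n arbitrary: k)
  case 0
  show ?case by (auto simp: Gn_def intro!: exI[of _ 0])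
next
  case (Suc n)
  then obtain A S where "\<And>y. of_int (k div 2) \<le> 2 ^ n * y \<and> 2 ^ n * y \<le> of_int (k div 2) + 1
      \<Longrightarrow> Gn n y = A + S * y"
    by blast
  then show ?case using Gn_Suc_affine_on_child by blast
qed

lemma deriv_locally_affine:
  assumes "open U" "x \<in> U" "\<And>y. y \<in> U \<Longrightarrow> f y = A + S * y"
  shows "deriv f x = S"
proof -
  have "((\<lambda>y. A + S * y) has_field_derivative S) (at x)"
    by (auto intro!: derivative_eq_intros)
  then have "(f has_field_derivative S) (at x)"
    by (rule has_field_derivative_transform_within_open[OF _ assms(1,2)]) (use assms(3) in auto)
  then show ?thesis by (rule DERIV_imp_deriv)
qed

lemma deriv_Gn_on_dyadic_interval:
  fixes k :: int
  assumes "\<And>y. of_int k \<le> 2 ^ n * y \<and> 2 ^ n * y \<le> of_int k + 1 \<Longrightarrow> Gn n y = A + S * y"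
    and "of_int k < 2 ^ n * x" "2 ^ n * x < of_int k + 1"
  shows "deriv (Gn n) x = S"
proof (rule deriv_locally_affine[of "{of_int k / 2 ^ n <..< (of_int k + 1) / 2 ^ n}"])
  show "x \<in> {of_int k / 2 ^ n <..< (of_int k + 1) / 2 ^ n}"
    using assms(2,3) by (simp add: field_simps)
  fix y :: real assume "y \<in> {of_int k / 2 ^ n <..< (of_int k + 1) / 2 ^ n}"
  then show "Gn n y = A + S * y" by (intro assms(1)) (simp add: field_simps)
qed simp

lemma not_in_Dall_imp_nondyadic:
  assumes "x \<notin> Dall"
  shows "(2::real) ^ j * x \<notin> \<int>"
proof
  assume "2 ^ j * x \<in> \<int>"
  then obtain m where "2 ^ j * x = of_int m" by (auto elim: Ints_cases)
  then have "x \<in> Dn (Suc j)" unfolding Dn_def by (auto simp: field_simps)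
  then show False using assms unfolding Dall_def by force
qed

lemma floor_double_div_2: "\<lfloor>2 * t\<rfloor> div 2 = \<lfloor>t :: real\<rfloor>"
proof -
  define m where "m = \<lfloor>2 * t\<rfloor>"
  have "real_of_int m = 2 * of_int (m div 2) + of_int (m mod 2)"
    by (metis mult_div_mod_eq of_int_add of_int_mult of_int_numeral)
  moreover have "0 \<le> real_of_int (m mod 2)" "real_of_int (m mod 2) \<le> 1" by simp_all
  moreover have "of_int m \<le> 2 * t" "2 * t < of_int m + 1" unfolding m_def by linarith+
  ultimately have "of_int (m div 2) \<le> t" "t < of_int (m div 2) + 1" by linarith+
  then show ?thesis unfolding m_def by (simp add: floor_unique)
qed

lemma of_int_floor_less_of_not_Ints: "t \<notin> \<int> \<Longrightarrow> of_int \<lfloor>t\<rfloor> < (t :: real)"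
  by (metis Ints_of_int of_int_floor_le order_le_less)

lemma takagi_reflected_secant:
  assumes nd: "\<And>j. (2::real) ^ j * x \<notin> \<int>"
  obtains x' where "takagi x' - takagi x = deriv (Gn n) x * (x' - x)" "\<bar>x' - x\<bar> \<le> 1 / 2 ^ n"
    "if even \<lfloor>2 ^ Suc n * x\<rfloor> then x < x' else x' < x"
proof -
  define k where "k = \<lfloor>2 ^ n * x\<rfloor>"
  define k' where "k' = \<lfloor>2 ^ Suc n * x\<rfloor>"
  have "k' div 2 = k"
    using floor_double_div_2[of "2 ^ n * x"] unfolding k_def k'_def by (simp add: mult.assoc)
  then have k'k: "k' = 2 * k + k' mod 2"
    using div_mult_mod_eq[of k' 2] by linarith
  have k'bounds: "of_int k' < 2 ^ Suc n * x" "2 ^ Suc n * x < of_int k' + 1"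
    unfolding k'_def using of_int_floor_less_of_not_Ints[OF nd[of "Suc n"]] by linarith+
  have kbounds: "of_int k < 2 ^ n * x" "2 ^ n * x < of_int k + 1"
    unfolding k_def using of_int_floor_less_of_not_Ints[OF nd[of n]] by linarith+
  obtain A S where AS: "\<And>y. of_int k \<le> 2 ^ n * y \<and> 2 ^ n * y \<le> of_int k + 1 \<Longrightarrow> Gn n y = A + S * y"
    using Gn_affine_on_dyadic_interval by blast
  have S: "deriv (Gn n) x = S"
    using deriv_Gn_on_dyadic_interval[OF AS kbounds] by blast
  define x' where "x' = (2 * of_int k + 1) / 2 ^ n - x"
  have x'x: "x' - x = (2 * of_int k + 1 - 2 ^ Suc n * x) / 2 ^ n"
    unfolding x'_def by (simp add: field_simps)
  have "2 ^ n * (x + x') = of_int (2 * k + 1)"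
    unfolding x'_def by (simp add: field_simps)
  then have "takagi x' - takagi x = Gn n x' - Gn n x"
    by (intro takagi_reflect) simp
  also have "\<dots> = S * (x' - x)"
    using AS[of x] AS[of x'] kbounds \<open>2 ^ n * (x + x') = _\<close>
    by (simp add: algebra_simps)
  finally have "takagi x' - takagi x = deriv (Gn n) x * (x' - x)" by (simp add: S)
  moreover have "\<bar>x' - x\<bar> \<le> 1 / 2 ^ n"
    using kbounds unfolding x'x by (simp add: divide_right_mono)
  moreover have "if even k' then x < x' else x' < x"
  proof (cases "even k'")
    case True
    then have "k' = 2 * k" using k'k by presburger
    then have "0 < x' - x" using k'bounds(2) unfolding x'x by simp
    then show ?thesis using True by simp
  next
    case False
    then have "k' = 2 * k + 1" using k'k by presburger
    then have "x' - x < 0" using k'bounds(1) unfolding x'x by (simp add: divide_less_0_iff)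
    then show ?thesis using False by simp
  qed
  ultimately show ?thesis using that unfolding k'_def by blast
qed

lemma deriv_Gn_Suc:
  assumes nd: "\<And>j. (2::real) ^ j * x \<notin> \<int>"
  shows "deriv (Gn (Suc n)) x = deriv (Gn n) x + (if even \<lfloor>2 ^ Suc n * x\<rfloor> then 1 else -1)"
proof -
  define k' where "k' = \<lfloor>2 ^ Suc n * x\<rfloor>"
  have k'k: "k' div 2 = \<lfloor>2 ^ n * x\<rfloor>"
    using floor_double_div_2[of "2 ^ n * x"] unfolding k'_def by (simp add: mult.assoc)
  have k'bounds: "of_int k' < 2 ^ Suc n * x" "2 ^ Suc n * x < of_int k' + 1"
    unfolding k'_def using of_int_floor_less_of_not_Ints[OF nd[of "Suc n"]] by linarith+
  have kbounds: "of_int (k' div 2) < 2 ^ n * x" "2 ^ n * x < of_int (k' div 2) + 1"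
    unfolding k'k using of_int_floor_less_of_not_Ints[OF nd[of n]] by linarith+
  obtain A S where AS: "\<And>y. of_int (k' div 2) \<le> 2 ^ n * y \<and> 2 ^ n * y \<le> of_int (k' div 2) + 1
      \<Longrightarrow> Gn n y = A + S * y"
    using Gn_affine_on_dyadic_interval by blast
  obtain A' where "\<forall>y. of_int k' \<le> 2 ^ Suc n * y \<and> 2 ^ Suc n * y \<le> of_int k' + 1
      \<longrightarrow> Gn (Suc n) y = A' + (S + (if even k' then 1 else -1)) * y"
    using Gn_Suc_affine_on_child[OF AS] by blast
  then have "deriv (Gn (Suc n)) x = S + (if even k' then 1 else -1)"
    by (intro deriv_Gn_on_dyadic_interval[OF _ k'bounds]) blast
  moreover have "deriv (Gn n) x = S"
    using deriv_Gn_on_dyadic_interval[OF AS kbounds] by blast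
  ultimately show ?thesis unfolding k'_def by simp
qed

lemma superdiff_secant_bound:
  assumes "\<xi> \<in> superdiff f x" "\<epsilon> > 0"
  obtains \<delta> where "\<delta> > 0"
    "\<And>x'. x' \<noteq> x \<Longrightarrow> \<bar>x' - x\<bar> < \<delta> \<Longrightarrow> f x' - f x - \<xi> * (x' - x) < \<epsilon> * \<bar>x' - x\<bar>"
proof -
  let ?q = "\<lambda>h. (f (x + h) - f x - \<xi> * h) / \<bar>h\<bar>"
  have "Limsup (at 0) (\<lambda>h. ereal (?q h)) < ereal \<epsilon>"
    using assms unfolding superdiff_def by (auto intro: le_less_trans)
  then have "eventually (\<lambda>h. ereal (?q h) < ereal \<epsilon>) (at 0)" by (rule Limsup_lessD)
  then obtain \<delta> where "\<delta> > 0" and \<delta>: "\<And>h. h \<noteq> 0 \<Longrightarrow> \<bar>h\<bar> < \<delta> \<Longrightarrow> ?q h < \<epsilon>"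
    unfolding eventually_at by auto
  have "f x' - f x - \<xi> * (x' - x) < \<epsilon> * \<bar>x' - x\<bar>" if "x' \<noteq> x" "\<bar>x' - x\<bar> < \<delta>" for x'
    using \<delta>[of "x' - x"] that by (simp add: pos_divide_less_eq)
  then show ?thesis using that \<open>\<delta> > 0\<close> by blast
qed

lemma deriv_Gn_steps_near_supergradient:
  assumes nd: "\<And>j. (2::real) ^ j * x \<notin> \<int>" and "\<xi> \<in> superdiff takagi x" "\<epsilon> > 0"
  shows "eventually (\<lambda>n. (deriv (Gn (Suc n)) x = deriv (Gn n) x + 1 \<and> deriv (Gn n) x < \<xi> + \<epsilon>)
    \<or> (deriv (Gn (Suc n)) x = deriv (Gn n) x - 1 \<and> \<xi> - \<epsilon> < deriv (Gn n) x)) sequentially"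
proof -
  obtain \<delta> where "\<delta> > 0" and \<delta>: "\<And>x'. x' \<noteq> x \<Longrightarrow> \<bar>x' - x\<bar> < \<delta>
      \<Longrightarrow> takagi x' - takagi x - \<xi> * (x' - x) < \<epsilon> * \<bar>x' - x\<bar>"
    using superdiff_secant_bound[OF assms(2,3)] by blast
  obtain N where N: "(1 / 2 :: real) ^ N < \<delta>"
    using real_arch_pow_inv[OF \<open>\<delta> > 0\<close>, of "1 / 2"] by auto
  show ?thesis unfolding eventually_sequentially
  proof (intro exI allI impI)
    fix n assume "N \<le> n"
    let ?S = "deriv (Gn n) x"
    obtain x' where secant: "takagi x' - takagi x = ?S * (x' - x)" and "\<bar>x' - x\<bar> \<le> 1 / 2 ^ n"
      and dir: "if even \<lfloor>2 ^ Suc n * x\<rfloor> then x < x' else x' < x"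
      using takagi_reflected_secant[OF nd] by blast
    have "(1 / 2 :: real) ^ n \<le> (1 / 2) ^ N" using \<open>N \<le> n\<close> by (intro power_decreasing) auto
    then have "\<bar>x' - x\<bar> < \<delta>" using \<open>\<bar>x' - x\<bar> \<le> 1 / 2 ^ n\<close> N by (simp add: power_one_over)
    then have bound: "(?S - \<xi>) * (x' - x) < \<epsilon> * \<bar>x' - x\<bar>"
      using \<delta>[of x'] dir secant by (auto simp: algebra_simps split: if_splits)
    show "(deriv (Gn (Suc n)) x = ?S + 1 \<and> ?S < \<xi> + \<epsilon>) \<or> (deriv (Gn (Suc n)) x = ?S - 1 \<and> \<xi> - \<epsilon> < ?S)"
    proof (cases "even \<lfloor>2 ^ Suc n * x\<rfloor>")
      case True
      with dir bound have "(?S - \<xi>) * (x' - x) < \<epsilon> * (x' - x)" "0 < x' - x" by auto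
      then have "?S < \<xi> + \<epsilon>" using mult_less_cancel_right_pos by fastforce
      with True show ?thesis by (simp add: deriv_Gn_Suc[OF nd])
    next
      case False
      with dir bound have "(\<xi> - ?S) * (x - x') < \<epsilon> * (x - x')" "0 < x - x'" by (auto simp: algebra_simps)
      then have "\<xi> - \<epsilon> < ?S" using mult_less_cancel_right_pos by fastforce
      with False show ?thesis by (simp add: deriv_Gn_Suc[OF nd])
    qed
  qed
qed

lemma limsup_liminf_of_unit_steps:
  fixes s :: "nat \<Rightarrow> real"
  assumes "eventually (\<lambda>n. (s (Suc n) = s n + 1 \<and> s n < c) \<or> (s (Suc n) = s n - 1 \<and> d < s n)) sequentially"
  shows "limsup (\<lambda>n. ereal (s n)) \<le> ereal (c + 1)" "ereal (d - 1) \<le> liminf (\<lambda>n. ereal (s n))"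
proof -
  obtain N where step: "\<And>n. N \<le> n \<Longrightarrow> (s (Suc n) = s n + 1 \<and> s n < c) \<or> (s (Suc n) = s n - 1 \<and> d < s n)"
    using assms unfolding eventually_sequentially by blast
  have up: "s (N + k) \<le> max (c + 1) (s N - k)" for k
  proof (induction k)
    case (Suc k)
    then show ?case using step[of "N + k"] by (auto simp: max_def split: if_splits)
  qed simp
  have down: "min (d - 1) (s N + k) \<le> s (N + k)" for k
  proof (induction k)
    case (Suc k)
    then show ?case using step[of "N + k"] by (auto simp: min_def split: if_splits)
  qed simp
  have "eventually (\<lambda>n. s n \<le> c + 1) sequentially"
  proof (rule eventually_sequentiallyI)
    fix n assume n: "N + nat \<lceil>s N - c - 1\<rceil> \<le> n"
    then have "s N - c - 1 \<le> real (n - N)" by linarith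
    then show "s n \<le> c + 1" using up[of "n - N"] n by auto
  qed
  then have "eventually (\<lambda>n. ereal (s n) \<le> ereal (c + 1)) sequentially"
    by (rule eventually_mono) simp
  then show "limsup (\<lambda>n. ereal (s n)) \<le> ereal (c + 1)" by (rule Limsup_bounded)
  have "eventually (\<lambda>n. d - 1 \<le> s n) sequentially"
  proof (rule eventually_sequentiallyI)
    fix n assume n: "N + nat \<lceil>d - 1 - s N\<rceil> \<le> n"
    then have "d - 1 - s N \<le> real (n - N)" by linarith
    then show "d - 1 \<le> s n" using down[of "n - N"] n by auto
  qed
  then have "eventually (\<lambda>n. ereal (d - 1) \<le> ereal (s n)) sequentially"
    by (rule eventually_mono) simp
  then show "ereal (d - 1) \<le> liminf (\<lambda>n. ereal (s n))" by (rule Liminf_bounded)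
qed

lemma ereal_gap_le_2_of_epsilon_bounds:
  fixes u l :: ereal and \<xi> :: real
  assumes "l \<le> u"
    and "\<And>\<epsilon>. \<epsilon> > 0 \<Longrightarrow> u \<le> ereal (\<xi> + \<epsilon> + 1) \<and> ereal (\<xi> - \<epsilon> - 1) \<le> l"
  shows "\<bar>u\<bar> \<noteq> \<infinity> \<and> \<bar>l\<bar> \<noteq> \<infinity> \<and> u - l \<le> 2"
proof -
  have "u \<le> ereal (\<xi> + 2)" "ereal (\<xi> - 2) \<le> l"
    using assms(2)[of 1] by (simp_all add: add.commute)
  then obtain U L where U: "u = ereal U" and L: "l = ereal L"
    using assms(1) by (cases u; cases l) auto
  have "U \<le> (\<xi> + 1) + \<epsilon>" "\<xi> - 1 \<le> L + \<epsilon>" if "\<epsilon> > 0" for \<epsilon>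
    using assms(2)[OF that] unfolding U L by (simp_all add: algebra_simps)
  then have "U \<le> \<xi> + 1" "\<xi> - 1 \<le> L" by (blast intro: field_le_epsilon)+
  then show ?thesis unfolding U L by simp
qed
theorem corollary2p2:
  fixes x :: real
  assumes "x \<notin> Dall"
    and "\<bar>limsup (\<lambda>n. ereal (deriv (Gn n) x))\<bar> = \<infinity>
         \<or> \<bar>liminf (\<lambda>n. ereal (deriv (Gn n) x))\<bar> = \<infinity>
         \<or> limsup (\<lambda>n. ereal (deriv (Gn n) x)) - liminf (\<lambda>n. ereal (deriv (Gn n) x)) > 2"
  shows "superdiff takagi x = {}"
proof (rule ccontr)
  assume "superdiff takagi x \<noteq> {}"
  then obtain \<xi> where \<xi>: "\<xi> \<in> superdiff takagi x" by blast
  let ?limsup = "limsup (\<lambda>n. ereal (deriv (Gn n) x))"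
  let ?liminf = "liminf (\<lambda>n. ereal (deriv (Gn n) x))"
  have "?limsup \<le> ereal (\<xi> + \<epsilon> + 1) \<and> ereal (\<xi> - \<epsilon> - 1) \<le> ?liminf" if "\<epsilon> > 0" for \<epsilon>
    using limsup_liminf_of_unit_steps[OF deriv_Gn_steps_near_supergradient[OF
        not_in_Dall_imp_nondyadic[OF assms(1)] \<xi> that]] by blast
  moreover have "?liminf \<le> ?limsup" by (rule Liminf_le_Limsup) simp
  ultimately have "\<bar>?limsup\<bar> \<noteq> \<infinity> \<and> \<bar>?liminf\<bar> \<noteq> \<infinity> \<and> ?limsup - ?liminf \<le> 2"
    by (intro ereal_gap_le_2_of_epsilon_bounds)
  then show False using assms(2) by auto
qed

end
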